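(* Let $\mathcal D=(C_1,C_2,C_3,C_4)$ be any ordered, oriented Descartes configuration and let $\mathbf D=\tfrac12\begin{pmatrix}-1&1&1&1\\1&-1&1&1\\1&1&-1&1\\1&1&1&-1\end{pmatrix}$. Then $\mathbf D\in\mathrm{Aut}(Q_D)$, and $\mathbf D\mathbf W_{\mathcal D}=\mathbf W_{\mathcal D^\perp}$ for an ordered, oriented Descartes configuration $\mathcal D^\perp=(C_1^\perp,\dots,C_4^\perp)$ in which, for each $i$, the circle $C_i^\perp$ is (as an unoriented circle or line) the circle through the three tangency points of $\mathcal D$ that do not lie on $C_i$. The configuration $\mathcal D^\perp$ has the same six tangency points as $\mathcal D$, and its circles meet those of $\mathcal D$ orthogonally at these points.
   Context: Oriented circles: radius $r$, oriented curvature $\pm1/r$, $+$ iff the interior is the bounded open disk; oriented lines have curvature $0$, unit normal $\mathbf h$, interior the open half-plane into which $\mathbf h$ points. A Descartes configuration: four mutually tangent circles/lines with six distinct tangency points (parallel lines tangent at $\infty$); oriented if the four interiors are pairwise disjoint or become so after reversing all orientations. Augmented curvature-center coordinates: for center $\mathbf c$ and oriented radius $r$, $\mathbf w(C)=((|\mathbf c|^2-r^2)/r,1/r,c_1/r,c_2/r)$; for the line $\mathbf x\cdot\mathbf h=m$ with interior-pointing unit normal $\mathbf h$, $\mathbf w(C)=(2m,0,h_1,h_2)$. $\mathbf W_{\mathcal D}$ has $k$-th row $\mathbf w(C_k)$. $\mathbf Q_D=\mathbf I-\frac12\mathbf 1\mathbf 1^T$ and $\mathrm{Aut}(Q_D)=\{\mathbf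 U:\mathbf U^T\mathbf Q_D\mathbf U=\mathbf Q_D\}$. *)

theory Defs
  imports "HOL-Analysis.Analysis"
begin

text \<open>OCirc c r : circle with centre c and oriented (signed) radius r; r > 0 iff the interior is
              the bounded open disk.
  OLine h m : the line x . h = m with interior-pointing unit normal h; interior is the open
              half-plane x . h > m.\<close>

datatype ocircle = OCirc complex real | OLine complex real

definition dotc :: "complex \<Rightarrow> complex \<Rightarrow> real" where
  "dotc x y = Re x * Re y + Im x * Im y"

fun valid_oc :: "ocircle \<Rightarrow> bool" where
  "valid_oc (OCirc c r) \<longleftrightarrow> r \<noteq> 0"
| "valid_oc (OLine h m) \<longleftrightarrow> cmod h = 1"

text \<open>Point set in the extended plane (None = the point at infinity, lying on every line).\<close>
fun ext_pts :: "ocircle \<Rightarrow> complex option set" where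
  "ext_pts (OCirc c r) = Some ` sphere c \<bar>r\<bar>"
| "ext_pts (OLine h m) = insert None (Some ` {x. dotc x h = m})"

fun interior_oc :: "ocircle \<Rightarrow> complex set" where
  "interior_oc (OCirc c r) = (if r > 0 then ball c r else {x. dist x c > \<bar>r\<bar>})"
| "interior_oc (OLine h m) = {x. dotc x h > m}"

fun reverse_oc :: "ocircle \<Rightarrow> ocircle" where
  "reverse_oc (OCirc c r) = OCirc c (- r)"
| "reverse_oc (OLine h m) = OLine (- h) (- m)"

text \<open>Tangency: exactly one common point in the extended plane (parallel lines are tangent at
  infinity; crossing lines meet twice, at a finite point and at infinity).\<close>
definition tangent_oc :: "ocircle \<Rightarrow> ocircle \<Rightarrow> bool" where
  "tangent_oc C D \<longleftrightarrow> (\<exists>!p. p \<in> ext_pts C \<inter> ext_pts D)"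

definition tangency_point :: "ocircle \<Rightarrow> ocircle \<Rightarrow> complex option" where
  "tangency_point C D = (THE p. p \<in> ext_pts C \<inter> ext_pts D)"

fun orthogonal_oc :: "ocircle \<Rightarrow> ocircle \<Rightarrow> bool" where
  "orthogonal_oc (OCirc c r) (OCirc d s) \<longleftrightarrow> (cmod (c - d))\<^sup>2 = r\<^sup>2 + s\<^sup>2"
| "orthogonal_oc (OCirc c r) (OLine h m) \<longleftrightarrow> dotc c h = m"
| "orthogonal_oc (OLine h m) (OCirc c r) \<longleftrightarrow> dotc c h = m"
| "orthogonal_oc (OLine h m) (OLine k n) \<longleftrightarrow> dotc h k = 0"

type_synonym config = "4 \<Rightarrow> ocircle"

definition descartes_config :: "config \<Rightarrow> bool" where
  "descartes_config C \<longleftrightarrow>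
     (\<forall>i. valid_oc (C i)) \<and>
     (\<forall>i j. i \<noteq> j \<longrightarrow> tangent_oc (C i) (C j)) \<and>
     (\<forall>i j k l. i \<noteq> j \<longrightarrow> k \<noteq> l \<longrightarrow>
        tangency_point (C i) (C j) = tangency_point (C k) (C l) \<longrightarrow> {i, j} = {k, l})"

definition oriented_descartes_config :: "config \<Rightarrow> bool" where
  "oriented_descartes_config C \<longleftrightarrow> descartes_config C \<and>
     ((\<forall>i j. i \<noteq> j \<longrightarrow> interior_oc (C i) \<inter> interior_oc (C j) = {}) \<or>
      (\<forall>i j. i \<noteq> j \<longrightarrow> interior_oc (reverse_oc (C i)) \<inter> interior_oc (reverse_oc (C j)) = {}))"

definition tangency_points :: "config \<Rightarrow> complex option set" where
  "tangency_points C = {tangency_point (C i) (C j) | i j. i \<noteq> j}"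

fun acc_coords :: "ocircle \<Rightarrow> real^4" where
  "acc_coords (OCirc c r) =
     vector [((cmod c)\<^sup>2 - r\<^sup>2) / r, 1 / r, Re c / r, Im c / r]"
| "acc_coords (OLine h m) = vector [2 * m, 0, Re h, Im h]"

definition W_mat :: "config \<Rightarrow> real^4^4" where
  "W_mat C = (\<chi> k. acc_coords (C k))"

definition Q_D :: "real^4^4" where
  "Q_D = (\<chi> i j. (if i = j then 1 else 0) - 1/2)"

definition Aut_QD :: "(real^4^4) set" where
  "Aut_QD = {U. transpose U ** Q_D ** U = Q_D}"

definition D_mat :: "real^4^4" where
  "D_mat = (\<chi> i j. if i = j then - 1/2 else 1/2)"

end

theory Submission
  imports Defs
begin

text \<open>Augmented curvature-center coordinates turn oriented circles into the vectors of norm \<open>-1\<close>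
  for the Lorentz form \<open>L(x, y) = (x\<^sub>1y\<^sub>2 + x\<^sub>2y\<^sub>1)/2 - x\<^sub>3y\<^sub>3 - x\<^sub>4y\<^sub>4\<close>, points of the extended
  plane into null vectors, and incidence into \<open>L\<close>-orthogonality. Two tangent circles with disjoint
  interiors have \<open>L(a, b) = 1\<close> and touch at the point represented by the null vector \<open>a + b\<close>, so an
  oriented Descartes configuration amounts to four circles with Gram matrix \<open>-2 Q\<^sub>D\<close> whose pairwise
  sums all point to the future (or all to the past).
  The rows of \<open>D W\<close> are \<open>w'\<^sub>i = (w\<^sub>1 + w\<^sub>2 + w\<^sub>3 + w\<^sub>4)/2 - w\<^sub>i\<close>; they satisfy
  \<open>L(w'\<^sub>i, w\<^sub>m) = 2 \<delta>\<^sub>i\<^sub>m\<close>, hence have the same Gram matrix, are orthogonal to \<open>w\<^sub>j\<close> for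
  \<open>j \<noteq> i\<close>, and \<open>w'\<^sub>i + w'\<^sub>j = w\<^sub>k + w\<^sub>l\<close> whenever \<open>{i, j, k, l} = {1, 2, 3, 4}\<close>. So they form an
  oriented Descartes configuration with the same tangency points. Finally, a point common to \<open>C\<^sub>j\<close> and
  \<open>C\<^sub>i\<^sup>\<bottom>\<close> is a null vector orthogonal to \<open>w\<^sub>j\<close> and \<open>w'\<^sub>i\<close>; its coordinates in the basis
  \<open>w\<^sub>1, \<dots>, w\<^sub>4\<close> force it to be proportional to some \<open>w\<^sub>j + w\<^sub>k\<close>, i.e. a tangency point.\<close>

lemma vector_4_nth [simp]:
  "(vector [x, y, z, w] :: ('a::zero)^4) $ 1 = x"
  "(vector [x, y, z, w] :: ('a::zero)^4) $ 2 = y"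
  "(vector [x, y, z, w] :: ('a::zero)^4) $ 3 = z"
  "(vector [x, y, z, w] :: ('a::zero)^4) $ 4 = w"
  unfolding vector_def by simp_all

section \<open>The Lorentz form\<close>

definition lorentz :: "real^4 \<Rightarrow> real^4 \<Rightarrow> real" where
  "lorentz x y = (x $ 1 * y $ 2 + x $ 2 * y $ 1) / 2 - x $ 3 * y $ 3 - x $ 4 * y $ 4"

lemma lorentz_commute: "lorentz x y = lorentz y x"
  by (simp add: lorentz_def field_simps)

lemma lorentz_linear [simp]:
  "lorentz (x + y) z = lorentz x z + lorentz y z"
  "lorentz z (x + y) = lorentz z x + lorentz z y"
  "lorentz (x - y) z = lorentz x z - lorentz y z"
  "lorentz z (x - y) = lorentz z x - lorentz z y"
  "lorentz (a *\<^sub>R x) z = a * lorentz x z"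
  "lorentz z (a *\<^sub>R x) = a * lorentz z x"
  "lorentz (- x) z = - lorentz x z"
  "lorentz z (- x) = - lorentz z x"
  "lorentz 0 z = 0"
  "lorentz z 0 = 0"
  by (simp_all add: lorentz_def field_simps)

lemma lorentz_sum_left: "lorentz (sum f A) z = (\<Sum>a\<in>A. lorentz (f a) z)"
  by (induction A rule: infinite_finite_induct) simp_all

lemma lorentz_sum_right: "lorentz z (sum f A) = (\<Sum>a\<in>A. lorentz z (f a))"
  by (induction A rule: infinite_finite_induct) simp_all

section \<open>Circles, lines and points as vectors\<close>

lemma acc_coords_OCirc_nth [simp]:
  "acc_coords (OCirc c r) $ 1 = ((Re c)\<^sup>2 + (Im c)\<^sup>2 - r\<^sup>2) / r"
  "acc_coords (OCirc c r) $ 2 = 1 / r"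
  "acc_coords (OCirc c r) $ 3 = Re c / r"
  "acc_coords (OCirc c r) $ 4 = Im c / r"
  by (simp_all add: cmod_power2)

lemma acc_coords_OLine_nth [simp]:
  "acc_coords (OLine h m) $ 1 = 2 * m"
  "acc_coords (OLine h m) $ 2 = 0"
  "acc_coords (OLine h m) $ 3 = Re h"
  "acc_coords (OLine h m) $ 4 = Im h"
  by simp_all

declare acc_coords.simps [simp del]

lemma unit_complex_power2: "cmod h = 1 \<Longrightarrow> (Re h)\<^sup>2 + (Im h)\<^sup>2 = 1"
  by (metis cmod_power2 power_one)

lemma lorentz_acc_coords_self: "valid_oc A \<Longrightarrow> lorentz (acc_coords A) (acc_coords A) = -1"
  by (cases A) (auto simp: lorentz_def field_simps power2_eq_square dest!: unit_complex_power2)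

lemma acc_coords_reverse_oc: "acc_coords (reverse_oc A) = - acc_coords A"
  by (cases A) (simp_all add: vec_eq_iff forall_4 field_simps power2_eq_square)

lemma ext_pts_reverse_oc: "ext_pts (reverse_oc A) = ext_pts A"
  by (cases A) (auto simp: dotc_def)

lemma valid_reverse_oc: "valid_oc (reverse_oc A) = valid_oc A"
  by (cases A) auto

lemma lorentz_acc_coords_OCirc_OCirc:
  assumes "r1 \<noteq> 0" "r2 \<noteq> 0"
  shows "lorentz (acc_coords (OCirc c1 r1)) (acc_coords (OCirc c2 r2)) =
    ((cmod (c1 - c2))\<^sup>2 - r1\<^sup>2 - r2\<^sup>2) / (2 * r1 * r2)"
  using assms unfolding lorentz_def cmod_power2 by (simp add: field_simps power2_eq_square)

lemma lorentz_acc_coords_OCirc_OLine: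
  assumes "r \<noteq> 0"
  shows "lorentz (acc_coords (OCirc c r)) (acc_coords (OLine h m)) = (m - dotc c h) / r"
  using assms unfolding lorentz_def dotc_def by (simp add: field_simps power2_eq_square)

lemma lorentz_acc_coords_OLine_OLine:
  "lorentz (acc_coords (OLine h m)) (acc_coords (OLine k n)) = - dotc h k"
  unfolding lorentz_def dotc_def by simp

text \<open>The inverse of \<^const>\<open>acc_coords\<close>; it is only meaningful on vectors of Lorentz norm \<open>-1\<close>.\<close>

definition ocircle_of_acc :: "real^4 \<Rightarrow> ocircle" where
  "ocircle_of_acc v = (if v $ 2 = 0 then OLine (Complex (v $ 3) (v $ 4)) (v $ 1 / 2)
     else OCirc (Complex (v $ 3 / v $ 2) (v $ 4 / v $ 2)) (1 / v $ 2))"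

lemma ocircle_of_acc_inverse:
  assumes "lorentz v v = -1"
  shows "valid_oc (ocircle_of_acc v)" "acc_coords (ocircle_of_acc v) = v"
proof -
  have norm: "v $ 1 * v $ 2 = (v $ 3)\<^sup>2 + (v $ 4)\<^sup>2 - 1"
    using assms unfolding lorentz_def by (simp add: power2_eq_square)
  show "valid_oc (ocircle_of_acc v)"
  proof (cases "v $ 2 = 0")
    case True
    then have "(v $ 3)\<^sup>2 + (v $ 4)\<^sup>2 = 1" using norm by simp
    with True show ?thesis by (simp add: ocircle_of_acc_def cmod_def)
  qed (simp add: ocircle_of_acc_def)
  show "acc_coords (ocircle_of_acc v) = v"
  proof (cases "v $ 2 = 0")
    case False
    have "((v $ 3 / v $ 2)\<^sup>2 + (v $ 4 / v $ 2)\<^sup>2 - (1 / v $ 2)\<^sup>2) / (1 / v $ 2)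
        = ((v $ 3)\<^sup>2 + (v $ 4)\<^sup>2 - 1) / v $ 2"
      using False by (simp add: field_simps power2_eq_square)
    moreover have "((v $ 3)\<^sup>2 + (v $ 4)\<^sup>2 - 1) / v $ 2 = v $ 1"
      using False by (simp add: norm[symmetric])
    ultimately show ?thesis
      using False by (simp add: ocircle_of_acc_def vec_eq_iff forall_4)
  qed (simp add: ocircle_of_acc_def vec_eq_iff forall_4)
qed

fun null_vec :: "complex option \<Rightarrow> real^4" where
  "null_vec None = vector [1, 0, 0, 0]"
| "null_vec (Some p) = vector [(cmod p)\<^sup>2, 1, Re p, Im p]"

lemma null_vec_nth [simp]:
  "null_vec None $ 1 = 1" "null_vec None $ 2 = 0" "null_vec None $ 3 = 0" "null_vec None $ 4 = 0"
  "null_vec (Some p) $ 1 = (Re p)\<^sup>2 + (Im p)\<^sup>2" "null_vec (Some p) $ 2 = 1"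
  "null_vec (Some p) $ 3 = Re p" "null_vec (Some p) $ 4 = Im p"
  by (simp_all add: cmod_power2)

declare null_vec.simps [simp del]

definition point_of_null_vec :: "real^4 \<Rightarrow> complex option" where
  "point_of_null_vec n =
     (if n $ 2 = 0 then None else Some (Complex (n $ 3 / n $ 2) (n $ 4 / n $ 2)))"

lemma lorentz_null_vec_self: "lorentz (null_vec P) (null_vec P) = 0"
  by (cases P) (simp_all add: lorentz_def power2_eq_square field_simps)

lemma eq_abs_iff_power2_eq: "0 \<le> (d::real) \<Longrightarrow> d = \<bar>t\<bar> \<longleftrightarrow> d\<^sup>2 = t\<^sup>2"
  by (metis abs_of_nonneg power2_abs power2_eq_iff_nonneg abs_ge_zero)

lemma mem_ext_pts_iff_lorentz:
  assumes "valid_oc A"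
  shows "P \<in> ext_pts A \<longleftrightarrow> lorentz (acc_coords A) (null_vec P) = 0"
proof (cases A)
  case (OCirc c r)
  then have r: "r \<noteq> 0" using assms by simp
  show ?thesis
  proof (cases P)
    case (Some p)
    have "lorentz (acc_coords A) (null_vec P) = ((dist c p)\<^sup>2 - r\<^sup>2) / (2 * r)"
      using r unfolding OCirc Some lorentz_def dist_norm cmod_power2
      by (simp add: field_simps power2_eq_square)
    moreover have "P \<in> ext_pts A \<longleftrightarrow> dist c p = \<bar>r\<bar>"
      using OCirc Some by auto
    moreover have "dist c p = \<bar>r\<bar> \<longleftrightarrow> (dist c p)\<^sup>2 = r\<^sup>2"
      by (simp add: eq_abs_iff_power2_eq)
    ultimately show ?thesis using r by simp
  qed (use OCirc r in \<open>auto simp: lorentz_def\<close>)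
next
  case (OLine h m)
  then show ?thesis by (cases P) (auto simp: lorentz_def dotc_def algebra_simps)
qed

lemma null_vec_point_of_null_vec:
  assumes "lorentz n n = 0" "n \<noteq> 0"
  obtains k where "k \<noteq> 0" "n = k *\<^sub>R null_vec (point_of_null_vec n)"
proof (cases "n $ 2 = 0")
  case True
  then have "- (n $ 3 * n $ 3) = n $ 4 * n $ 4"
    using assms(1) unfolding lorentz_def by simp
  then have "n $ 3 * n $ 3 + n $ 4 * n $ 4 = 0" by linarith
  then have "n $ 3 = 0" "n $ 4 = 0" by (simp_all add: sum_squares_eq_zero_iff)
  with True assms(2) show ?thesis
    by (intro that[of "n $ 1"]) (auto simp: point_of_null_vec_def vec_eq_iff forall_4)
next
  case False
  have "n $ 1 * n $ 2 = (n $ 3)\<^sup>2 + (n $ 4)\<^sup>2"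
    using assms(1) unfolding lorentz_def by (simp add: power2_eq_square)
  then have "n $ 1 = ((n $ 3)\<^sup>2 + (n $ 4)\<^sup>2) / n $ 2"
    using False by (simp add: eq_divide_eq)
  also have "\<dots> = n $ 2 * ((n $ 3 / n $ 2)\<^sup>2 + (n $ 4 / n $ 2)\<^sup>2)"
    using False by (simp add: field_simps power2_eq_square)
  finally have "n $ 1 = n $ 2 * ((n $ 3 / n $ 2)\<^sup>2 + (n $ 4 / n $ 2)\<^sup>2)" .
  with False show ?thesis
    by (intro that[of "n $ 2"]) (simp_all add: point_of_null_vec_def vec_eq_iff forall_4)
qed

lemma eq_if_lorentz_null_vec_eq_0:
  assumes "lorentz (null_vec P) (null_vec Q) = 0"
  shows "P = Q"
proof (cases P; cases Q)
  fix p q assume PQ: "P = Some p" "Q = Some q"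
  have "(Re p - Re q)\<^sup>2 + (Im p - Im q)\<^sup>2 = 0"
    using assms unfolding PQ lorentz_def by (simp add: power2_eq_square algebra_simps)
  then show ?thesis
    using PQ by (simp add: sum_power2_eq_zero_iff complex_eqI)
qed (use assms in \<open>auto simp: lorentz_def\<close>)

lemma point_of_null_vec_eqI:
  assumes "lorentz n n = 0" "n \<noteq> 0" "lorentz (null_vec P) n = 0"
  shows "point_of_null_vec n = P"
proof -
  define Q where "Q = point_of_null_vec n"
  obtain k where "k \<noteq> 0" "n = k *\<^sub>R null_vec Q"
    using null_vec_point_of_null_vec assms(1,2) unfolding Q_def by blast
  with assms(3) have "lorentz (null_vec P) (null_vec Q) = 0" by simp
  then show ?thesis unfolding Q_def by (metis eq_if_lorentz_null_vec_eq_0)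
qed

lemma lorentz_eq_0_if_point_of_null_vec_eq:
  assumes "lorentz m m = 0" "m \<noteq> 0" "lorentz n n = 0" "n \<noteq> 0"
    and "point_of_null_vec m = point_of_null_vec n"
  shows "lorentz m n = 0"
proof -
  define P where "P = point_of_null_vec m"
  obtain a b where "m = a *\<^sub>R null_vec P" "n = b *\<^sub>R null_vec P"
    using null_vec_point_of_null_vec assms unfolding P_def by metis
  then show ?thesis by (simp add: lorentz_null_vec_self)
qed

lemma point_of_null_vec_mem_ext_pts:
  assumes "valid_oc A" "lorentz n n = 0" "n \<noteq> 0" "lorentz (acc_coords A) n = 0"
  shows "point_of_null_vec n \<in> ext_pts A"
proof -
  define Q where "Q = point_of_null_vec n"
  obtain k where "k \<noteq> 0" "n = k *\<^sub>R null_vec Q"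
    using null_vec_point_of_null_vec assms(2,3) unfolding Q_def by blast
  with assms(4) have "lorentz (acc_coords A) (null_vec Q) = 0" by simp
  then show ?thesis using mem_ext_pts_iff_lorentz assms(1) unfolding Q_def by blast
qed

text \<open>For a nonzero null vector, \<open>future n\<close> says that \<open>n\<close> is a positive multiple of some
  \<^term>\<open>null_vec P\<close>.\<close>

definition future :: "real^4 \<Rightarrow> bool" where
  "future n \<longleftrightarrow> n $ 2 > 0 \<or> (n $ 2 = 0 \<and> n $ 1 > 0)"

section \<open>Pairs of circles\<close>

lemma orthogonal_oc_if_lorentz_eq_0:
  assumes "valid_oc A" "valid_oc B" "lorentz (acc_coords A) (acc_coords B) = 0"
  shows "orthogonal_oc A B"
proof (cases A; cases B)
  fix c1 r1 c2 r2 assume "A = OCirc c1 r1" "B = OCirc c2 r2"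
  then show ?thesis
    using assms lorentz_acc_coords_OCirc_OCirc[of r1 r2 c1 c2] by (simp add: divide_eq_0_iff)
next
  fix c r h m assume "A = OCirc c r" "B = OLine h m"
  then show ?thesis using assms lorentz_acc_coords_OCirc_OLine[of r c h m] by simp
next
  fix h m c r assume "A = OLine h m" "B = OCirc c r"
  then show ?thesis
    using assms lorentz_acc_coords_OCirc_OLine[of r c h m] lorentz_commute by simp
next
  fix h m k n assume "A = OLine h m" "B = OLine k n"
  then show ?thesis using assms lorentz_acc_coords_OLine_OLine[of h m k n] by simp
qed

text \<open>\<open>a + b\<close> is then a null vector orthogonal to \<open>a\<close> and \<open>b\<close>, and the only one up to scaling.\<close>

lemma tangent_oc_if_lorentz_eq_1:
  assumes "valid_oc A" "valid_oc B" "lorentz (acc_coords A) (acc_coords B) = 1"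
    and "acc_coords A + acc_coords B \<noteq> 0"
  shows "tangent_oc A B" "tangency_point A B = point_of_null_vec (acc_coords A + acc_coords B)"
proof -
  define n where "n = acc_coords A + acc_coords B"
  have "lorentz (acc_coords A) (acc_coords A) = -1" "lorentz (acc_coords B) (acc_coords B) = -1"
    using lorentz_acc_coords_self assms(1,2) by auto
  moreover have "lorentz (acc_coords B) (acc_coords A) = 1"
    using assms(3) lorentz_commute by metis
  ultimately have null: "lorentz n n = 0"
    and orth: "lorentz (acc_coords A) n = 0" "lorentz (acc_coords B) n = 0"
    using assms(3) by (simp_all add: n_def)
  have mem: "point_of_null_vec n \<in> ext_pts A \<inter> ext_pts B"
    using point_of_null_vec_mem_ext_pts assms null orth n_def by auto
  have uniq: "P = point_of_null_vec n" if "P \<in> ext_pts A \<inter> ext_pts B" for P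
  proof -
    have "lorentz (acc_coords A) (null_vec P) = 0" "lorentz (acc_coords B) (null_vec P) = 0"
      using that mem_ext_pts_iff_lorentz assms(1,2) by auto
    then have "lorentz (null_vec P) n = 0"
      by (simp add: n_def lorentz_commute[of "null_vec P"])
    then show ?thesis using point_of_null_vec_eqI null assms(4) n_def by metis
  qed
  show "tangent_oc A B" unfolding tangent_oc_def using mem uniq by blast
  show "tangency_point A B = point_of_null_vec n"
    unfolding tangency_point_def using mem uniq by blast
qed

text \<open>The second point is the reflection of the first one in the line of centres.\<close>

lemma circles_second_common_point:
  fixes x y a1 a2 r1 r2 :: real
  assumes h1: "x\<^sup>2 + y\<^sup>2 = r1\<^sup>2" and h2: "(x - a1)\<^sup>2 + (y - a2)\<^sup>2 = r2\<^sup>2"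
    and nd: "(a1\<^sup>2 + a2\<^sup>2 - r1\<^sup>2 - r2\<^sup>2)\<^sup>2 \<noteq> 4 * r1\<^sup>2 * r2\<^sup>2"
  shows "\<exists>x' y'. (x' \<noteq> x \<or> y' \<noteq> y) \<and> x'\<^sup>2 + y'\<^sup>2 = r1\<^sup>2 \<and> (x' - a1)\<^sup>2 + (y' - a2)\<^sup>2 = r2\<^sup>2"
proof -
  have id: "(a1\<^sup>2 + a2\<^sup>2 - r1\<^sup>2 - r2\<^sup>2)\<^sup>2 - 4 * r1\<^sup>2 * r2\<^sup>2 = -4 * (x*a2 - y*a1)\<^sup>2"
    unfolding h1[symmetric] h2[symmetric] by algebra
  have cr: "x*a2 - y*a1 \<noteq> 0" using id nd by auto
  define V where "V = a1\<^sup>2 + a2\<^sup>2"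
  have V: "V \<noteq> 0" using cr unfolding V_def by (auto simp: sum_power2_eq_zero_iff)
  define k where "k = (x*a1 + y*a2) / V"
  have kV: "k * V = x*a1 + y*a2" unfolding k_def using V by simp
  have e1: "(2*k*a1 - x)\<^sup>2 + (2*k*a2 - y)\<^sup>2 = x\<^sup>2 + y\<^sup>2 + 4*k*(k*V - (x*a1 + y*a2))"
    unfolding V_def by algebra
  have e2: "(2*k*a1 - x - a1)\<^sup>2 + (2*k*a2 - y - a2)\<^sup>2 = (x - a1)\<^sup>2 + (y - a2)\<^sup>2
      + 4*(k - 1)*(k*V - (x*a1 + y*a2))"
    unfolding V_def by algebra
  have ne: "2*k*a1 - x \<noteq> x \<or> 2*k*a2 - y \<noteq> y"
  proof (rule ccontr)
    assume "\<not> ?thesis"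
    then have "x = k*a1" "y = k*a2" by auto
    then have "x*a2 - y*a1 = 0" by simp
    then show False using cr by simp
  qed
  show ?thesis
    by (rule exI[of _ "2*k*a1 - x"], rule exI[of _ "2*k*a2 - y"])
       (use ne e1 e2 kV h1 h2 in simp)
qed

text \<open>The second point is the reflection of the first one in the perpendicular from the centre.\<close>

lemma circle_line_second_common_point:
  fixes x y h1 h2 e r :: real
  assumes hh: "h1\<^sup>2 + h2\<^sup>2 = 1" and c: "x\<^sup>2 + y\<^sup>2 = r\<^sup>2" and l: "x*h1 + y*h2 = e"
    and nd: "e\<^sup>2 \<noteq> r\<^sup>2"
  shows "\<exists>x' y'. (x' \<noteq> x \<or> y' \<noteq> y) \<and> x'\<^sup>2 + y'\<^sup>2 = r\<^sup>2 \<and> x'*h1 + y'*h2 = e"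
proof -
  have e1: "(2*e*h1 - x)\<^sup>2 + (2*e*h2 - y)\<^sup>2 = 4*e\<^sup>2*(h1\<^sup>2+h2\<^sup>2) - 4*e*(x*h1+y*h2) + (x\<^sup>2+y\<^sup>2)"
    by algebra
  have e2: "(2*e*h1 - x)*h1 + (2*e*h2 - y)*h2 = 2*e*(h1\<^sup>2+h2\<^sup>2) - (x*h1+y*h2)"
    by algebra
  have ne: "2*e*h1 - x \<noteq> x \<or> 2*e*h2 - y \<noteq> y"
  proof (rule ccontr)
    assume "\<not> ?thesis"
    then have "x = e*h1" "y = e*h2" by auto
    then have "x\<^sup>2 + y\<^sup>2 = e\<^sup>2 * (h1\<^sup>2+h2\<^sup>2)" by algebra
    then show False using hh c nd by simp
  qed
  show ?thesis
    by (rule exI[of _ "2*e*h1 - x"], rule exI[of _ "2*e*h2 - y"])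
       (use ne e1 e2 hh c l in \<open>simp add: power2_eq_square\<close>)
qed

lemma lines_common_point:
  fixes h1 h2 k1 k2 m n :: real
  assumes "h1\<^sup>2 + h2\<^sup>2 = 1" "k1\<^sup>2 + k2\<^sup>2 = 1" "(h1*k1 + h2*k2)\<^sup>2 \<noteq> 1"
  shows "\<exists>x y. x*h1 + y*h2 = m \<and> x*k1 + y*k2 = n"
proof -
  define d where "d = h1*k2 - h2*k1"
  have "(h1*k1 + h2*k2)\<^sup>2 + d\<^sup>2 = (h1\<^sup>2 + h2\<^sup>2) * (k1\<^sup>2 + k2\<^sup>2)" unfolding d_def by algebra
  then have "d \<noteq> 0" using assms by auto
  then have "((m*k2 - n*h2) / d) * h1 + ((h1*n - k1*m) / d) * h2 = m"
    "((m*k2 - n*h2) / d) * k1 + ((h1*n - k1*m) / d) * k2 = n"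
    by (simp_all add: field_simps) (simp_all add: d_def algebra_simps)
  then show ?thesis by blast
qed

lemma Some_mem_ext_pts_OCirc:
  "Some q \<in> ext_pts (OCirc c r) \<longleftrightarrow> (Re q - Re c)\<^sup>2 + (Im q - Im c)\<^sup>2 = r\<^sup>2"
proof -
  have "Some q \<in> ext_pts (OCirc c r) \<longleftrightarrow> dist c q = \<bar>r\<bar>" by auto
  also have "\<dots> \<longleftrightarrow> (dist c q)\<^sup>2 = r\<^sup>2"
    by (simp add: eq_abs_iff_power2_eq)
  also have "\<dots> \<longleftrightarrow> (Re q - Re c)\<^sup>2 + (Im q - Im c)\<^sup>2 = r\<^sup>2"
    by (simp add: dist_norm cmod_power2 power2_commute)
  finally show ?thesis .
qed

lemma Some_mem_ext_pts_OLine: "Some q \<in> ext_pts (OLine h m) \<longleftrightarrow> Re q * Re h + Im q * Im h = m"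
  by (auto simp: dotc_def)

lemma tangent_oc_commute: "tangent_oc A B = tangent_oc B A"
  unfolding tangent_oc_def by (simp add: Int_commute)

lemma tangent_oc_reverse_oc: "tangent_oc (reverse_oc A) (reverse_oc B) = tangent_oc A B"
  by (simp add: tangent_oc_def ext_pts_reverse_oc)

lemma tangent_ocE:
  assumes "tangent_oc A B"
  obtains P where "P \<in> ext_pts A" "P \<in> ext_pts B"
    "\<And>Q. Q \<in> ext_pts A \<Longrightarrow> Q \<in> ext_pts B \<Longrightarrow> Q = P"
  using assms unfolding tangent_oc_def by blast

lemma tangent_OCirc_OCirc_lorentz_square:
  assumes r: "r1 \<noteq> 0" "r2 \<noteq> 0" and t: "tangent_oc (OCirc c1 r1) (OCirc c2 r2)"
  shows "(lorentz (acc_coords (OCirc c1 r1)) (acc_coords (OCirc c2 r2)))\<^sup>2 = 1"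
proof -
  obtain P where P: "P \<in> ext_pts (OCirc c1 r1)" "P \<in> ext_pts (OCirc c2 r2)"
    and u: "\<And>Q. Q \<in> ext_pts (OCirc c1 r1) \<Longrightarrow> Q \<in> ext_pts (OCirc c2 r2) \<Longrightarrow> Q = P"
    using tangent_ocE[OF t] by metis
  obtain p where p: "P = Some p" using P by (cases P) auto
  define x where "x = Re p - Re c1"
  define y where "y = Im p - Im c1"
  define a1 where "a1 = Re c2 - Re c1"
  define a2 where "a2 = Im c2 - Im c1"
  have h1: "x\<^sup>2 + y\<^sup>2 = r1\<^sup>2" using P(1) p Some_mem_ext_pts_OCirc x_def y_def by simp
  have h2: "(x - a1)\<^sup>2 + (y - a2)\<^sup>2 = r2\<^sup>2"
    using P(2) p Some_mem_ext_pts_OCirc x_def y_def a1_def a2_def by simp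
  have D: "(a1\<^sup>2 + a2\<^sup>2 - r1\<^sup>2 - r2\<^sup>2)\<^sup>2 = 4 * r1\<^sup>2 * r2\<^sup>2"
  proof (rule ccontr)
    assume "\<not> ?thesis"
    then obtain x' y' where xy: "x' \<noteq> x \<or> y' \<noteq> y" "x'\<^sup>2 + y'\<^sup>2 = r1\<^sup>2"
      "(x' - a1)\<^sup>2 + (y' - a2)\<^sup>2 = r2\<^sup>2" using circles_second_common_point[OF h1 h2] by blast
    define q where "q = Complex (Re c1 + x') (Im c1 + y')"
    have "Some q \<in> ext_pts (OCirc c1 r1)" using xy unfolding Some_mem_ext_pts_OCirc q_def by simp
    moreover have "Some q \<in> ext_pts (OCirc c2 r2)"
      using xy unfolding Some_mem_ext_pts_OCirc q_def a1_def a2_def by (simp add: algebra_simps)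
    ultimately have "Some q = P" using u by blast
    then have "q = p" using p by simp
    then show False using xy unfolding q_def x_def y_def by auto
  qed
  have cm: "(cmod (c1 - c2))\<^sup>2 = a1\<^sup>2 + a2\<^sup>2" unfolding cmod_power2 a1_def a2_def
    by (simp add: power2_commute)
  have "(lorentz (acc_coords (OCirc c1 r1)) (acc_coords (OCirc c2 r2)))\<^sup>2 =
      (a1\<^sup>2 + a2\<^sup>2 - r1\<^sup>2 - r2\<^sup>2)\<^sup>2 / (2*r1*r2)\<^sup>2"
    unfolding lorentz_acc_coords_OCirc_OCirc[OF r] cm by (simp add: power_divide)
  also have "\<dots> = 1" unfolding D using r by (simp add: power_mult_distrib)
  finally show ?thesis .
qed

lemma tangent_OCirc_OLine_lorentz_square:
  assumes r: "r \<noteq> 0" and hh: "cmod h = 1" and t: "tangent_oc (OCirc c r) (OLine h m)"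
  shows "(lorentz (acc_coords (OCirc c r)) (acc_coords (OLine h m)))\<^sup>2 = 1"
proof -
  obtain P where P: "P \<in> ext_pts (OCirc c r)" "P \<in> ext_pts (OLine h m)"
    and u: "\<And>Q. Q \<in> ext_pts (OCirc c r) \<Longrightarrow> Q \<in> ext_pts (OLine h m) \<Longrightarrow> Q = P"
    using tangent_ocE[OF t] by metis
  obtain p where p: "P = Some p" using P by (cases P) auto
  define x where "x = Re p - Re c"
  define y where "y = Im p - Im c"
  define e where "e = m - dotc c h"
  have h1: "x\<^sup>2 + y\<^sup>2 = r\<^sup>2" using P(1) p Some_mem_ext_pts_OCirc x_def y_def by simp
  have "Re p * Re h + Im p * Im h = m" using P(2) p Some_mem_ext_pts_OLine by blast
  then have h2: "x * Re h + y * Im h = e" unfolding x_def y_def e_def dotc_def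
    by (simp add: left_diff_distrib)
  have hs: "(Re h)\<^sup>2 + (Im h)\<^sup>2 = 1" using unit_complex_power2 hh by blast
  have D: "e\<^sup>2 = r\<^sup>2"
  proof (rule ccontr)
    assume "\<not> ?thesis"
    then obtain x' y' where xy: "x' \<noteq> x \<or> y' \<noteq> y" "x'\<^sup>2 + y'\<^sup>2 = r\<^sup>2"
      "x' * Re h + y' * Im h = e" using circle_line_second_common_point[OF hs h1 h2] by blast
    define q where "q = Complex (Re c + x') (Im c + y')"
    have "Some q \<in> ext_pts (OCirc c r)" using xy unfolding Some_mem_ext_pts_OCirc q_def by simp
    moreover have "Some q \<in> ext_pts (OLine h m)"
      using xy unfolding Some_mem_ext_pts_OLine q_def e_def dotc_def by (simp add: algebra_simps)
    ultimately have "Some q = P" using u by blast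
    then have "q = p" using p by simp
    then show False using xy unfolding q_def x_def y_def by auto
  qed
  show ?thesis
    unfolding lorentz_acc_coords_OCirc_OLine[OF r] e_def[symmetric] using D r by (simp add: power_divide)
qed

lemma tangent_OLine_OLine_lorentz_square:
  assumes hh: "cmod h = 1" "cmod k = 1" and t: "tangent_oc (OLine h m) (OLine k n)"
  shows "(lorentz (acc_coords (OLine h m)) (acc_coords (OLine k n)))\<^sup>2 = 1"
proof -
  have hs: "(Re h)\<^sup>2 + (Im h)\<^sup>2 = 1" "(Re k)\<^sup>2 + (Im k)\<^sup>2 = 1"
    using unit_complex_power2 hh by blast+
  have "(Re h * Re k + Im h * Im k)\<^sup>2 = 1"
  proof (rule ccontr)
    assume "\<not> ?thesis"
    then obtain x y where xy: "x * Re h + y * Im h = m" "x * Re k + y * Im k = n"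
      using lines_common_point[OF hs] by blast
    have "Some (Complex x y) \<in> ext_pts (OLine h m)" "Some (Complex x y) \<in> ext_pts (OLine k n)"
      using xy unfolding Some_mem_ext_pts_OLine by simp_all
    moreover have "None \<in> ext_pts (OLine h m)" "None \<in> ext_pts (OLine k n)" by auto
    ultimately show False using t unfolding tangent_oc_def by blast
  qed
  then show ?thesis unfolding lorentz_acc_coords_OLine_OLine power2_minus dotc_def .
qed

lemma tangent_oc_lorentz_square:
  assumes "valid_oc A" "valid_oc B" "tangent_oc A B"
  shows "(lorentz (acc_coords A) (acc_coords B))\<^sup>2 = 1"
proof (cases A; cases B)
  fix c1 r1 c2 r2 assume "A = OCirc c1 r1" "B = OCirc c2 r2"
  with assms show ?thesis by (simp add: tangent_OCirc_OCirc_lorentz_square)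
next
  fix c r h m assume "A = OCirc c r" "B = OLine h m"
  with assms show ?thesis by (simp add: tangent_OCirc_OLine_lorentz_square)
next
  fix h m c r assume "A = OLine h m" "B = OCirc c r"
  with assms show ?thesis
    using tangent_OCirc_OLine_lorentz_square[of r h c m]
    by (metis valid_oc.simps tangent_oc_commute lorentz_commute)
next
  fix h m k n assume "A = OLine h m" "B = OLine k n"
  with assms show ?thesis by (simp add: tangent_OLine_OLine_lorentz_square)
qed

section \<open>Interiors\<close>

lemma dotc_add_scale: "dotc (c + complex_of_real t * h) k = dotc c k + t * dotc h k"
  by (simp add: dotc_def algebra_simps)

lemma dotc_scale: "dotc (complex_of_real t * h) k = t * dotc h k"
  by (simp add: dotc_def algebra_simps)

lemma dotc_diff: "dotc (x - c) h = dotc x h - dotc c h"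
  by (simp add: dotc_def algebra_simps)

lemma dotc_le: "dotc u h \<le> cmod u * cmod h"
proof -
  have "dotc u h = Re (u * cnj h)" by (simp add: dotc_def)
  also have "\<dots> \<le> cmod (u * cnj h)" by (rule complex_Re_le_cmod)
  also have "\<dots> = cmod u * cmod h" by (simp add: norm_mult)
  finally show ?thesis .
qed

lemma dotc_unit_self: "cmod h = 1 \<Longrightarrow> dotc h h = 1"
  using unit_complex_power2[of h] by (simp add: dotc_def power2_eq_square)

lemma interior_oc_OCirc:
  "interior_oc (OCirc c r) = (if r > 0 then {x. dist c x < r} else {x. dist x c > \<bar>r\<bar>})"
  by (auto simp: ball_def)

lemma dist_centres_if_lorentz_eq_1:
  assumes "r1 \<noteq> 0" "r2 \<noteq> 0" "lorentz (acc_coords (OCirc c1 r1)) (acc_coords (OCirc c2 r2)) = 1"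
  shows "dist c1 c2 = \<bar>r1 + r2\<bar>"
proof -
  have "(cmod (c1 - c2))\<^sup>2 - r1\<^sup>2 - r2\<^sup>2 = 2 * r1 * r2"
    using assms by (simp add: lorentz_acc_coords_OCirc_OCirc divide_eq_eq)
  then have "(dist c1 c2)\<^sup>2 = (r1 + r2)\<^sup>2" by (simp add: dist_norm power2_sum)
  then show ?thesis by (simp add: eq_abs_iff_power2_eq)
qed

lemma interiors_meet_OCirc_OCirc_neg:
  assumes "r1 < 0" "r2 < 0"
  shows "interior_oc (OCirc c1 r1) \<inter> interior_oc (OCirc c2 r2) \<noteq> {}"
proof -
  define R where "R = - r1 - r2 + dist c1 c2 + 1"
  define x where "x = c1 + complex_of_real R"
  have R0: "R > 0" using assms unfolding R_def by (simp add: add_pos_nonneg)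
  have d1: "dist x c1 = R" unfolding x_def dist_norm using R0 by simp
  have "dist x c1 \<le> dist x c2 + dist c2 c1" by (rule dist_triangle)
  then have "dist x c2 \<ge> R - dist c1 c2" using d1 by (simp add: dist_commute)
  then have "x \<in> interior_oc (OCirc c2 r2)" using assms unfolding interior_oc_OCirc R_def by auto
  moreover have "dist x c1 > \<bar>r1\<bar>" unfolding d1 R_def
    using assms zero_le_dist[of c1 c2] abs_of_neg[of r1] by linarith
  then have "x \<in> interior_oc (OCirc c1 r1)" using assms unfolding interior_oc_OCirc by auto
  ultimately show ?thesis by blast
qed

lemma interiors_meet_OCirc_OCirc:
  assumes r: "r1 \<noteq> 0" "r2 \<noteq> 0"
    and L: "lorentz (acc_coords (OCirc c1 r1)) (acc_coords (OCirc c2 r2)) = -1"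
  shows "interior_oc (OCirc c1 r1) \<inter> interior_oc (OCirc c2 r2) \<noteq> {}"
proof -
  have "acc_coords (OCirc c2 (- r2)) = - acc_coords (OCirc c2 r2)"
    using acc_coords_reverse_oc[of "OCirc c2 r2"] by simp
  with r L have d: "dist c1 c2 = \<bar>r1 - r2\<bar>"
    using dist_centres_if_lorentz_eq_1[of r1 "- r2" c1 c2] by simp
  consider "r1 < 0" "r2 < 0" | "r1 > 0" "r2 < 0 \<or> r1 \<le> r2" | "r2 > 0" "r1 < 0 \<or> r2 \<le> r1"
    using r by linarith
  then show ?thesis
  proof cases
    case 1
    then show ?thesis by (rule interiors_meet_OCirc_OCirc_neg)
  next
    case 2
    then have "c1 \<in> interior_oc (OCirc c1 r1) \<inter> interior_oc (OCirc c2 r2)"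
      using d by (auto simp: interior_oc_OCirc dist_commute)
    then show ?thesis by blast
  next
    case 3
    then have "c2 \<in> interior_oc (OCirc c1 r1) \<inter> interior_oc (OCirc c2 r2)"
      using d by (auto simp: interior_oc_OCirc dist_commute)
    then show ?thesis by blast
  qed
qed

text \<open>The witness lies on the line of centres, at distance \<open>-r\<^sub>2\<close> from \<open>c\<^sub>1\<close> and \<open>r\<^sub>1\<close> from
  \<open>c\<^sub>2\<close>.\<close>

lemma interiors_disjoint_OCirc_OCirc_pos_neg_iff:
  assumes r: "r1 > 0" "r2 < 0" and d: "dist c1 c2 = \<bar>r1 + r2\<bar>" and nonzero: "r1 + r2 \<noteq> 0"
  shows "interior_oc (OCirc c1 r1) \<inter> interior_oc (OCirc c2 r2) = {} \<longleftrightarrow> r1 + r2 < 0"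
proof (cases "r1 + r2 < 0")
  case True
  have False if x1: "dist c1 x < r1" and x2: "dist x c2 > - r2" for x
  proof -
    have "dist x c2 \<le> dist x c1 + dist c1 c2" by (rule dist_triangle)
    then show False using x1 x2 d True by (simp add: dist_commute)
  qed
  then show ?thesis using True r unfolding interior_oc_OCirc by auto
next
  case False
  define t where "t = r1 + r2"
  have t_pos: "t > 0" using False nonzero t_def by simp
  have cm: "cmod (c2 - c1) = t" using d t_pos t_def by (simp add: dist_norm norm_minus_commute)
  define x where "x = c1 + complex_of_real (r2 / t) * (c2 - c1)"
  have "x - c1 = complex_of_real (r2 / t) * (c2 - c1)" unfolding x_def by simp
  then have "dist x c1 = \<bar>r2 / t\<bar> * t"
    unfolding dist_norm by (simp only: norm_mult norm_of_real cm)
  also have "\<dots> = - r2" using t_pos r by (simp add: abs_of_neg)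
  finally have x1: "dist c1 x = - r2" by (simp add: dist_commute)
  have "x - c2 = complex_of_real (r2 / t - 1) * (c2 - c1)" unfolding x_def
    by (simp add: algebra_simps)
  then have "dist x c2 = \<bar>r2 / t - 1\<bar> * t"
    unfolding dist_norm by (simp only: norm_mult norm_of_real cm)
  also have "\<dots> = \<bar>(r2 / t - 1) * t\<bar>" using t_pos by (simp add: abs_mult)
  also have "(r2 / t - 1) * t = - r1" using t_pos by (simp add: t_def field_simps)
  finally have x2: "dist x c2 = r1" using r by simp
  have "x \<in> interior_oc (OCirc c1 r1) \<inter> interior_oc (OCirc c2 r2)"
    using x1 x2 r t_pos t_def unfolding interior_oc_OCirc by auto
  then show ?thesis using False by blast
qed

lemma interiors_disjoint_iff_future_OCirc_OCirc:
  assumes r: "r1 \<noteq> 0" "r2 \<noteq> 0"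
    and L: "lorentz (acc_coords (OCirc c1 r1)) (acc_coords (OCirc c2 r2)) = 1"
    and nz: "acc_coords (OCirc c1 r1) + acc_coords (OCirc c2 r2) \<noteq> 0"
  shows "interior_oc (OCirc c1 r1) \<inter> interior_oc (OCirc c2 r2) = {} \<longleftrightarrow>
    future (acc_coords (OCirc c1 r1) + acc_coords (OCirc c2 r2))"
proof -
  have d: "dist c1 c2 = \<bar>r1 + r2\<bar>" using dist_centres_if_lorentz_eq_1[OF r L] .
  have s: "r1 + r2 \<noteq> 0"
  proof
    assume "r1 + r2 = 0"
    with d have "OCirc c2 r2 = reverse_oc (OCirc c1 r1)" by (simp add: eq_neg_iff_add_eq_0)
    with nz show False using acc_coords_reverse_oc[of "OCirc c1 r1"] by simp
  qed
  have "(acc_coords (OCirc c1 r1) + acc_coords (OCirc c2 r2)) $ 2 = (r1 + r2) / (r1 * r2)"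
    using r by (simp add: field_simps)
  then have future: "future (acc_coords (OCirc c1 r1) + acc_coords (OCirc c2 r2)) \<longleftrightarrow>
      (r1 + r2) / (r1 * r2) > 0"
    using r s by (auto simp: future_def)
  consider "r1 > 0" "r2 > 0" | "r1 < 0" "r2 < 0" | "r1 > 0" "r2 < 0" | "r1 < 0" "r2 > 0"
    using r by linarith
  then show ?thesis
  proof cases
    case 1
    have False if "dist c1 x < r1" "dist c2 x < r2" for x
      using that d 1 dist_triangle[of c1 c2 x] by (simp add: dist_commute)
    then have "interior_oc (OCirc c1 r1) \<inter> interior_oc (OCirc c2 r2) = {}"
      using 1 unfolding interior_oc_OCirc by auto
    with 1 show ?thesis by (simp add: future)
  next
    case 2
    then have "\<not> (r1 + r2) / (r1 * r2) > 0"
      using mult_neg_neg[of r1 r2] by (simp add: zero_less_divide_iff)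
    with 2 show ?thesis using interiors_meet_OCirc_OCirc_neg by (simp add: future)
  next
    case 3
    then have "(r1 + r2) / (r1 * r2) > 0 \<longleftrightarrow> r1 + r2 < 0"
      using mult_pos_neg[of r1 r2] by (auto simp: zero_less_divide_iff)
    with interiors_disjoint_OCirc_OCirc_pos_neg_iff[OF 3 d s] show ?thesis by (simp add: future)
  next
    case 4
    then have "(r1 + r2) / (r1 * r2) > 0 \<longleftrightarrow> r2 + r1 < 0"
      using mult_neg_pos[of r1 r2] by (auto simp: zero_less_divide_iff)
    moreover have "dist c2 c1 = \<bar>r2 + r1\<bar>" using d by (simp add: dist_commute add.commute)
    ultimately show ?thesis
      using 4 s interiors_disjoint_OCirc_OCirc_pos_neg_iff[of r2 r1 c2 c1]
      by (simp add: future Int_commute add.commute)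
  qed
qed

lemma interiors_meet_OCirc_OLine_neg:
  assumes "r < 0" "cmod h = 1"
  shows "interior_oc (OCirc c r) \<inter> interior_oc (OLine h m) \<noteq> {}"
proof -
  define t where "t = \<bar>m - dotc c h\<bar> + \<bar>r\<bar> + 1"
  define x where "x = c + complex_of_real t * h"
  have "t > \<bar>r\<bar>" "dotc c h + t > m"
    unfolding t_def using abs_ge_self[of "m - dotc c h"] by linarith+
  moreover have "dist x c = t"
    using assms(2) \<open>t > \<bar>r\<bar>\<close> by (simp add: x_def dist_norm norm_mult)
  moreover have "dotc x h = dotc c h + t"
    using assms(2) by (simp add: x_def dotc_add_scale dotc_unit_self)
  ultimately have "x \<in> interior_oc (OCirc c r) \<inter> interior_oc (OLine h m)"
    using assms(1) by (simp add: interior_oc_OCirc)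
  then show ?thesis by blast
qed

lemma interiors_meet_OCirc_OLine:
  assumes r: "r \<noteq> 0" and hh: "cmod h = 1"
    and L: "lorentz (acc_coords (OCirc c r)) (acc_coords (OLine h m)) = -1"
  shows "interior_oc (OCirc c r) \<inter> interior_oc (OLine h m) \<noteq> {}"
proof (cases "r > 0")
  case True
  have "dotc c h = m + r"
    using L r by (simp add: lorentz_acc_coords_OCirc_OLine divide_eq_eq)
  with True have "c \<in> interior_oc (OCirc c r) \<inter> interior_oc (OLine h m)"
    by (simp add: interior_oc_OCirc)
  then show ?thesis by blast
next
  case False
  with r have "r < 0" by simp
  with hh show ?thesis using interiors_meet_OCirc_OLine_neg by blast
qed

lemma interiors_disjoint_iff_future_OCirc_OLine:
  assumes r: "r \<noteq> 0" and hh: "cmod h = 1"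
    and L: "lorentz (acc_coords (OCirc c r)) (acc_coords (OLine h m)) = 1"
  shows "interior_oc (OCirc c r) \<inter> interior_oc (OLine h m) = {} \<longleftrightarrow>
    future (acc_coords (OCirc c r) + acc_coords (OLine h m))"
proof (cases "r > 0")
  case True
  have e: "dotc c h = m - r"
    using L r by (simp add: lorentz_acc_coords_OCirc_OLine divide_eq_eq)
  have "dotc x h \<le> m" if "dist c x < r" for x
  proof -
    have "dotc x h - dotc c h \<le> cmod (x - c)"
      using dotc_le[of "x - c" h] hh by (simp add: dotc_diff)
    with that e show ?thesis by (simp add: dist_norm norm_minus_commute)
  qed
  then have "interior_oc (OCirc c r) \<inter> interior_oc (OLine h m) = {}"
    using True by (fastforce simp: interior_oc_OCirc)
  with True show ?thesis by (simp add: future_def)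
next
  case False
  with r hh show ?thesis
    using interiors_meet_OCirc_OLine_neg[of r h c m] by (simp add: future_def)
qed

lemma interiors_meet_OLine_OLine:
  assumes hh: "cmod h = 1" "cmod k = 1"
    and L: "lorentz (acc_coords (OLine h m)) (acc_coords (OLine k n)) = -1"
  shows "interior_oc (OLine h m) \<inter> interior_oc (OLine k n) \<noteq> {}"
proof -
  have e: "dotc h k = 1" using L unfolding lorentz_acc_coords_OLine_OLine by simp
  define t where "t = \<bar>m\<bar> + \<bar>n\<bar> + 1"
  define x where "x = complex_of_real t * h"
  have "dotc x h = t" "dotc x k = t"
    unfolding x_def dotc_scale dotc_unit_self[OF hh(1)] e by simp_all
  then have "x \<in> interior_oc (OLine h m) \<inter> interior_oc (OLine k n)" unfolding t_def by auto
  then show ?thesis by blast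
qed

lemma interiors_disjoint_iff_future_OLine_OLine:
  assumes hh: "cmod h = 1" "cmod k = 1"
    and L: "lorentz (acc_coords (OLine h m)) (acc_coords (OLine k n)) = 1"
    and nz: "acc_coords (OLine h m) + acc_coords (OLine k n) \<noteq> 0"
  shows "interior_oc (OLine h m) \<inter> interior_oc (OLine k n) = {} \<longleftrightarrow>
    future (acc_coords (OLine h m) + acc_coords (OLine k n))"
proof -
  have "(Re h + Re k)\<^sup>2 + (Im h + Im k)\<^sup>2 = dotc h h + dotc k k + 2 * dotc h k"
    unfolding dotc_def by algebra
  also have "\<dots> = 0"
    using L hh by (simp add: lorentz_acc_coords_OLine_OLine dotc_unit_self)
  finally have kh: "Re k = - Re h" "Im k = - Im h" by (simp_all add: sum_power2_eq_zero_iff)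
  then have dk: "dotc x k = - dotc x h" for x by (simp add: dotc_def)
  have mn: "m + n \<noteq> 0"
    using nz kh by (auto simp: vec_eq_iff forall_4)
  have future: "future (acc_coords (OLine h m) + acc_coords (OLine k n)) \<longleftrightarrow> m + n > 0"
    by (auto simp: future_def)
  show ?thesis
  proof (cases "m + n > 0")
    case True
    then have "interior_oc (OLine h m) \<inter> interior_oc (OLine k n) = {}" using dk by auto
    with True show ?thesis by (simp add: future)
  next
    case False
    with mn have neg: "m + n < 0" by simp
    define x where "x = complex_of_real ((m - n) / 2) * h"
    have "dotc x h = (m - n) / 2" unfolding x_def dotc_scale dotc_unit_self[OF hh(1)] by simp
    then have "x \<in> interior_oc (OLine h m) \<inter> interior_oc (OLine k n)" using neg dk by auto
    with neg show ?thesis by (auto simp: future)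
  qed
qed

lemma interiors_meet_if_lorentz_eq_neg_1:
  assumes "valid_oc A" "valid_oc B" "lorentz (acc_coords A) (acc_coords B) = -1"
  shows "interior_oc A \<inter> interior_oc B \<noteq> {}"
proof (cases A; cases B)
  fix c1 r1 c2 r2 assume "A = OCirc c1 r1" "B = OCirc c2 r2"
  with assms show ?thesis by (simp add: interiors_meet_OCirc_OCirc del: interior_oc.simps)
next
  fix c r h m assume "A = OCirc c r" "B = OLine h m"
  with assms show ?thesis by (simp add: interiors_meet_OCirc_OLine del: interior_oc.simps)
next
  fix h m c r assume "A = OLine h m" "B = OCirc c r"
  with assms show ?thesis
    using interiors_meet_OCirc_OLine[of r h c m]
    by (metis valid_oc.simps lorentz_commute Int_commute)
next
  fix h m k n assume "A = OLine h m" "B = OLine k n"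
  with assms show ?thesis by (simp add: interiors_meet_OLine_OLine del: interior_oc.simps)
qed

lemma interiors_disjoint_iff_future:
  assumes "valid_oc A" "valid_oc B" "lorentz (acc_coords A) (acc_coords B) = 1"
    and "acc_coords A + acc_coords B \<noteq> 0"
  shows "interior_oc A \<inter> interior_oc B = {} \<longleftrightarrow> future (acc_coords A + acc_coords B)"
proof (cases A; cases B)
  fix c1 r1 c2 r2 assume "A = OCirc c1 r1" "B = OCirc c2 r2"
  with assms show ?thesis
    by (simp add: interiors_disjoint_iff_future_OCirc_OCirc del: interior_oc.simps)
next
  fix c r h m assume "A = OCirc c r" "B = OLine h m"
  with assms show ?thesis
    by (simp add: interiors_disjoint_iff_future_OCirc_OLine del: interior_oc.simps)
next
  fix h m c r assume "A = OLine h m" "B = OCirc c r"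
  with assms show ?thesis
    using interiors_disjoint_iff_future_OCirc_OLine[of r h c m]
    by (metis valid_oc.simps lorentz_commute Int_commute add.commute)
next
  fix h m k n assume "A = OLine h m" "B = OLine k n"
  with assms show ?thesis
    by (simp add: interiors_disjoint_iff_future_OLine_OLine del: interior_oc.simps)
qed

lemma lorentz_eq_1_if_tangent_interiors_disjoint:
  assumes "valid_oc A" "valid_oc B" "tangent_oc A B" "interior_oc A \<inter> interior_oc B = {}"
  shows "lorentz (acc_coords A) (acc_coords B) = 1"
proof -
  have "(lorentz (acc_coords A) (acc_coords B))\<^sup>2 = 1"
    using tangent_oc_lorentz_square assms(1-3) by blast
  then have "lorentz (acc_coords A) (acc_coords B) \<in> {1, -1}"
    by (auto simp: power2_eq_1_iff)
  then show ?thesis using interiors_meet_if_lorentz_eq_neg_1 assms by blast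
qed

section \<open>Descartes configurations as vector quadruples\<close>

lemma ex_not_mem_if_card_less: "card (A :: 'a::finite set) < CARD('a) \<Longrightarrow> \<exists>x. x \<notin> A"
proof (rule ccontr)
  assume "card A < CARD('a)" "\<nexists>x. x \<notin> A"
  then have "A = UNIV" by auto
  with \<open>card A < CARD('a)\<close> show False by simp
qed

lemma ex_distinct_4: "(i::4) \<noteq> j \<Longrightarrow> \<exists>k l. distinct [i, j, k, l]"
proof -
  assume ij: "i \<noteq> j"
  obtain k where k: "k \<notin> {i, j}"
    using ex_not_mem_if_card_less[of "{i, j}"] ij by (auto simp: card_insert_if)
  obtain l where l: "l \<notin> {i, j, k}"
    using ex_not_mem_if_card_less[of "{i, j, k}"] ij k by (auto simp: card_insert_if)
  show ?thesis using ij k l by auto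
qed

lemma sum_UNIV_4_distinct:
  assumes "distinct [i, j, k, l :: 4]"
  shows "sum f UNIV = f i + f j + f k + f l"
proof -
  have "card {i, j, k, l} = card (UNIV :: 4 set)" using assms by (simp add: card_insert_if)
  then have U: "UNIV = {i, j, k, l}" by (metis card_subset_eq finite subset_UNIV)
  show ?thesis unfolding U using assms by (simp add: add.assoc)
qed

text \<open>The Gram matrix of the rows of \<^term>\<open>W_mat C\<close> for the Lorentz form is \<open>-2 Q\<^sub>D\<close>.\<close>

definition descartes_gram :: "(4 \<Rightarrow> real^4) \<Rightarrow> bool" where
  "descartes_gram w \<longleftrightarrow> (\<forall>i j. lorentz (w i) (w j) = (if i = j then -1 else 1))"

definition pair_sums :: "(4 \<Rightarrow> real^4) \<Rightarrow> (real^4) set" where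
  "pair_sums w = {w i + w j | i j. i \<noteq> j}"

definition future_oriented :: "(4 \<Rightarrow> real^4) \<Rightarrow> bool" where
  "future_oriented w \<longleftrightarrow> (\<forall>v \<in> pair_sums w. future v)"

lemma future_oriented_iff: "future_oriented w \<longleftrightarrow> (\<forall>i j. i \<noteq> j \<longrightarrow> future (w i + w j))"
  unfolding future_oriented_def pair_sums_def by blast

lemma descartes_gramD: "descartes_gram w \<Longrightarrow> lorentz (w i) (w j) = (if i = j then -1 else 1)"
  by (simp add: descartes_gram_def)

lemma descartes_gram_uminus: "descartes_gram (uminus \<circ> w) \<longleftrightarrow> descartes_gram w"
  by (simp add: descartes_gram_def)

lemma lorentz_sum_descartes_gram:
  assumes "descartes_gram w"
  shows "lorentz (sum w UNIV) (w m) = 2"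
proof -
  have "lorentz (sum w UNIV) (w m) = (\<Sum>j\<in>UNIV. if j = m then -1 else 1)"
    using assms by (simp add: lorentz_sum_left descartes_gram_def)
  also have "\<dots> = (\<Sum>j\<in>UNIV. 1 - (if j = m then 2 else 0))"
    by (rule sum.cong) auto
  also have "\<dots> = 2" by (simp add: sum_subtractf)
  finally show ?thesis .
qed

lemma descartes_gram_pair_sum_nonzero:
  assumes "descartes_gram w"
  shows "w i + w j \<noteq> 0"
proof
  assume "w i + w j = 0"
  moreover have "lorentz (sum w UNIV) (w i + w j) = 4"
    using lorentz_sum_descartes_gram[OF assms] by simp
  ultimately show False by simp
qed

lemma descartes_gram_pair_sum_null:
  assumes "descartes_gram w" "i \<noteq> j"
  shows "lorentz (w i + w j) (w i + w j) = 0"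
  using assms by (simp add: descartes_gram_def)

lemma descartes_gram_pair_sums_orthogonal:
  assumes "descartes_gram w" "i \<noteq> j" "k \<noteq> l" "lorentz (w i + w j) (w k + w l) = 0"
  shows "{i, j} = {k, l}"
  using assms
  by (cases "i = k"; cases "i = l"; cases "j = k"; cases "j = l") (auto simp: descartes_gram_def)

lemma tangency_point_descartes_gram:
  assumes "\<forall>i. valid_oc (C i)" "descartes_gram (acc_coords \<circ> C)" "i \<noteq> j"
  shows "tangent_oc (C i) (C j)"
    "tangency_point (C i) (C j) = point_of_null_vec (acc_coords (C i) + acc_coords (C j))"
proof -
  have "lorentz (acc_coords (C i)) (acc_coords (C j)) = 1"
    using assms(2,3) by (simp add: descartes_gram_def)
  moreover have "acc_coords (C i) + acc_coords (C j) \<noteq> 0"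
    using descartes_gram_pair_sum_nonzero[OF assms(2)] by simp
  ultimately show "tangent_oc (C i) (C j)"
    "tangency_point (C i) (C j) = point_of_null_vec (acc_coords (C i) + acc_coords (C j))"
    using tangent_oc_if_lorentz_eq_1 assms(1) by auto
qed

lemma tangency_points_descartes_gram:
  assumes "\<forall>i. valid_oc (C i)" "descartes_gram (acc_coords \<circ> C)"
  shows "tangency_points C = point_of_null_vec ` pair_sums (acc_coords \<circ> C)"
proof -
  have "tangency_points C = (\<lambda>(i, j). tangency_point (C i) (C j)) ` {(i, j). i \<noteq> j}"
    unfolding tangency_points_def by auto
  also have "\<dots> =
      (\<lambda>(i, j). point_of_null_vec (acc_coords (C i) + acc_coords (C j))) ` {(i, j). i \<noteq> j}"
    using tangency_point_descartes_gram(2)[OF assms] by (intro image_cong) auto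
  also have "\<dots> = point_of_null_vec ` pair_sums (acc_coords \<circ> C)"
    unfolding pair_sums_def by auto
  finally show ?thesis .
qed

text \<open>The six tangency points are automatically distinct: the null vectors \<open>w\<^sub>i + w\<^sub>j\<close> of
  different pairs are not orthogonal.\<close>

lemma descartes_config_if_descartes_gram:
  assumes valid: "\<forall>i. valid_oc (C i)" and gram: "descartes_gram (acc_coords \<circ> C)"
  shows "descartes_config C"
proof -
  define w where "w = acc_coords \<circ> C"
  have gram_w: "descartes_gram w" using gram by (simp add: w_def)
  have tp: "tangency_point (C i) (C j) = point_of_null_vec (w i + w j)" if "i \<noteq> j" for i j
    using tangency_point_descartes_gram(2)[OF valid gram that] by (simp add: w_def)
  have "{i, j} = {k, l}"
    if ij: "i \<noteq> j" and kl: "k \<noteq> l"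
      and eq: "tangency_point (C i) (C j) = tangency_point (C k) (C l)" for i j k l
  proof (rule descartes_gram_pair_sums_orthogonal[OF gram_w ij kl])
    show "lorentz (w i + w j) (w k + w l) = 0"
    proof (rule lorentz_eq_0_if_point_of_null_vec_eq)
      show "lorentz (w i + w j) (w i + w j) = 0" "lorentz (w k + w l) (w k + w l) = 0"
        using descartes_gram_pair_sum_null[OF gram_w] ij kl by auto
      show "w i + w j \<noteq> 0" "w k + w l \<noteq> 0"
        using descartes_gram_pair_sum_nonzero[OF gram_w] by auto
      show "point_of_null_vec (w i + w j) = point_of_null_vec (w k + w l)"
        using eq by (simp add: tp ij kl)
    qed
  qed
  moreover have "tangent_oc (C i) (C j)" if "i \<noteq> j" for i j
    using tangency_point_descartes_gram(1)[OF valid gram that] .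
  ultimately show ?thesis
    using valid unfolding descartes_config_def by blast
qed

lemma descartes_gram_if_interiors_disjoint:
  assumes "\<forall>i. valid_oc (C i)" "\<forall>i j. i \<noteq> j \<longrightarrow> tangent_oc (C i) (C j)"
    and "\<forall>i j. i \<noteq> j \<longrightarrow> interior_oc (C i) \<inter> interior_oc (C j) = {}"
  shows "descartes_gram (acc_coords \<circ> C)"
  unfolding descartes_gram_def
proof (intro allI)
  fix i j
  show "lorentz ((acc_coords \<circ> C) i) ((acc_coords \<circ> C) j) = (if i = j then -1 else 1)"
    using assms lorentz_eq_1_if_tangent_interiors_disjoint[of "C i" "C j"]
      lorentz_acc_coords_self[of "C i"]
    by auto
qed

lemma interiors_disjoint_iff_future_oriented:
  assumes "\<forall>i. valid_oc (C i)" "descartes_gram (acc_coords \<circ> C)"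
  shows "(\<forall>i j. i \<noteq> j \<longrightarrow> interior_oc (C i) \<inter> interior_oc (C j) = {}) \<longleftrightarrow>
    future_oriented (acc_coords \<circ> C)"
proof -
  have "interior_oc (C i) \<inter> interior_oc (C j) = {} \<longleftrightarrow> future (acc_coords (C i) + acc_coords (C j))"
    if "i \<noteq> j" for i j
  proof (rule interiors_disjoint_iff_future)
    show "valid_oc (C i)" "valid_oc (C j)" using assms(1) by auto
    show "lorentz (acc_coords (C i)) (acc_coords (C j)) = 1"
      using descartes_gramD[OF assms(2), of i j] that by simp
    show "acc_coords (C i) + acc_coords (C j) \<noteq> 0"
      using descartes_gram_pair_sum_nonzero[OF assms(2), of i j] by simp
  qed
  then show ?thesis by (simp add: future_oriented_iff)
qed

lemma oriented_descartes_config_iff: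
  "oriented_descartes_config C \<longleftrightarrow> (\<forall>i. valid_oc (C i)) \<and> descartes_gram (acc_coords \<circ> C) \<and>
     (future_oriented (acc_coords \<circ> C) \<or> future_oriented (uminus \<circ> (acc_coords \<circ> C)))"
proof -
  have rev: "acc_coords \<circ> (reverse_oc \<circ> C) = uminus \<circ> (acc_coords \<circ> C)"
    by (simp add: fun_eq_iff acc_coords_reverse_oc)
  have valid_rev: "(\<forall>i. valid_oc ((reverse_oc \<circ> C) i)) \<longleftrightarrow> (\<forall>i. valid_oc (C i))"
    by (simp add: valid_reverse_oc)
  have gram_rev: "descartes_gram (acc_coords \<circ> (reverse_oc \<circ> C)) \<longleftrightarrow> descartes_gram (acc_coords \<circ> C)"
    by (simp add: rev descartes_gram_uminus)
  have orientation_iff: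
    "(\<forall>i j. i \<noteq> j \<longrightarrow> interior_oc (C i) \<inter> interior_oc (C j) = {}) \<or>
     (\<forall>i j. i \<noteq> j \<longrightarrow> interior_oc (reverse_oc (C i)) \<inter> interior_oc (reverse_oc (C j)) = {}) \<longleftrightarrow>
     future_oriented (acc_coords \<circ> C) \<or> future_oriented (uminus \<circ> (acc_coords \<circ> C))"
    if "\<forall>i. valid_oc (C i)" "descartes_gram (acc_coords \<circ> C)"
    using interiors_disjoint_iff_future_oriented[OF that]
      interiors_disjoint_iff_future_oriented[of "reverse_oc \<circ> C"] that valid_rev gram_rev
    by (simp add: rev)
  have gram: "descartes_gram (acc_coords \<circ> C)" if "oriented_descartes_config C"
  proof -
    from that have valid: "\<forall>i. valid_oc (C i)"
      and tangent: "\<forall>i j. i \<noteq> j \<longrightarrow> tangent_oc (C i) (C j)"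
      by (simp_all add: oriented_descartes_config_def descartes_config_def)
    from that show ?thesis unfolding oriented_descartes_config_def
    proof (elim conjE disjE)
      assume "\<forall>i j. i \<noteq> j \<longrightarrow> interior_oc (C i) \<inter> interior_oc (C j) = {}"
      with valid tangent show ?thesis by (rule descartes_gram_if_interiors_disjoint)
    next
      assume "\<forall>i j. i \<noteq> j \<longrightarrow> interior_oc (reverse_oc (C i)) \<inter> interior_oc (reverse_oc (C j)) = {}"
      then have "descartes_gram (acc_coords \<circ> (reverse_oc \<circ> C))"
        using descartes_gram_if_interiors_disjoint[of "reverse_oc \<circ> C"] valid tangent
        by (simp add: valid_reverse_oc tangent_oc_reverse_oc)
      with gram_rev show ?thesis by simp
    qed
  qed
  show ?thesis
  proof
    assume odc: "oriented_descartes_config C"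
    then have valid: "\<forall>i. valid_oc (C i)"
      by (simp add: oriented_descartes_config_def descartes_config_def)
    with odc gram orientation_iff[OF valid gram[OF odc]]
    show "(\<forall>i. valid_oc (C i)) \<and> descartes_gram (acc_coords \<circ> C) \<and>
      (future_oriented (acc_coords \<circ> C) \<or> future_oriented (uminus \<circ> (acc_coords \<circ> C)))"
      unfolding oriented_descartes_config_def by blast
  next
    assume "(\<forall>i. valid_oc (C i)) \<and> descartes_gram (acc_coords \<circ> C) \<and>
      (future_oriented (acc_coords \<circ> C) \<or> future_oriented (uminus \<circ> (acc_coords \<circ> C)))"
    then have valid: "\<forall>i. valid_oc (C i)" and gram: "descartes_gram (acc_coords \<circ> C)"
      and "future_oriented (acc_coords \<circ> C) \<or> future_oriented (uminus \<circ> (acc_coords \<circ> C))"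
      by simp_all
    with orientation_iff[OF valid gram] descartes_config_if_descartes_gram[OF valid gram]
    show "oriented_descartes_config C"
      unfolding oriented_descartes_config_def by blast
  qed
qed

section \<open>The dual configuration\<close>

definition descartes_dual :: "(4 \<Rightarrow> real^4) \<Rightarrow> 4 \<Rightarrow> real^4" where
  "descartes_dual w i = (1/2) *\<^sub>R sum w UNIV - w i"

lemma D_mat_mult_rows: "D_mat ** (\<chi> i. w i) = (\<chi> i. descartes_dual w i)"
proof -
  have "(D_mat ** (\<chi> i. w i)) $ i $ c = descartes_dual w i $ c" for i c
  proof -
    have "(D_mat ** (\<chi> i. w i)) $ i $ c = (\<Sum>k\<in>UNIV. (if i = k then -1/2 else 1/2) * w k $ c)"
      by (simp add: matrix_matrix_mult_def D_mat_def)
    also have "\<dots> = (\<Sum>k\<in>UNIV. (1/2) * w k $ c - (if i = k then w k $ c else 0))"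
      by (rule sum.cong) auto
    also have "\<dots> = descartes_dual w i $ c"
      by (simp add: descartes_dual_def sum_subtractf sum_distrib_left)
    finally show ?thesis .
  qed
  then show ?thesis by (simp add: vec_eq_iff)
qed

lemma lorentz_descartes_dual:
  assumes "descartes_gram w"
  shows "lorentz (descartes_dual w i) (w m) = (if i = m then 2 else 0)"
  using lorentz_sum_descartes_gram[OF assms] descartes_gramD[OF assms]
  by (simp add: descartes_dual_def)

lemma descartes_gram_descartes_dual:
  assumes "descartes_gram w"
  shows "descartes_gram (descartes_dual w)"
  unfolding descartes_gram_def
proof (intro allI)
  fix i j
  have "lorentz (descartes_dual w i) (descartes_dual w j) =
      (1/2) * (\<Sum>m\<in>UNIV. lorentz (descartes_dual w i) (w m)) - lorentz (descartes_dual w i) (w j)"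
    by (simp add: descartes_dual_def[of w j] lorentz_sum_right)
  then show "lorentz (descartes_dual w i) (descartes_dual w j) = (if i = j then -1 else 1)"
    by (simp add: lorentz_descartes_dual[OF assms])
qed

lemma descartes_dual_pair_sum:
  assumes "distinct [i, j, k, l]"
  shows "descartes_dual w i + descartes_dual w j = w k + w l"
proof -
  have "descartes_dual w i + descartes_dual w j = sum w UNIV - w i - w j"
    by (simp add: descartes_dual_def algebra_simps flip: scaleR_2)
  also have "\<dots> = w k + w l" by (simp add: sum_UNIV_4_distinct[OF assms])
  finally show ?thesis .
qed

lemma descartes_dual_uminus: "descartes_dual (uminus \<circ> w) = uminus \<circ> descartes_dual w"
  by (simp add: fun_eq_iff descartes_dual_def sum_negf)

lemma pair_sums_descartes_dual: "pair_sums (descartes_dual w) = pair_sums w"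
proof -
  have "\<exists>k l. k \<noteq> l \<and> v i + v j = u k + u l"
    if "i \<noteq> j" "v = descartes_dual w \<and> u = w \<or> v = w \<and> u = descartes_dual w" for i j v u
  proof -
    obtain k l where "distinct [i, j, k, l]" using ex_distinct_4 \<open>i \<noteq> j\<close> by blast
    then have "k \<noteq> l" "descartes_dual w i + descartes_dual w j = w k + w l"
      "w i + w j = descartes_dual w k + descartes_dual w l"
      using descartes_dual_pair_sum[of i j k l w] descartes_dual_pair_sum[of k l i j w] by auto
    with that show ?thesis by auto
  qed
  then show ?thesis unfolding pair_sums_def by blast
qed

lemma future_oriented_descartes_dual: "future_oriented (descartes_dual w) \<longleftrightarrow> future_oriented w"
  by (simp add: future_oriented_def pair_sums_descartes_dual)

lemma descartes_gram_spans:
  assumes "descartes_gram w"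
  obtains u where "x = (\<Sum>m\<in>UNIV. u m *\<^sub>R w m)"
proof -
  define f where "f u = (\<Sum>m\<in>UNIV. (u $ m) *\<^sub>R w m)" for u :: "real^4"
  have lin: "linear f"
    unfolding f_def by (intro linearI) (simp_all add: scaleR_add_left sum.distrib scaleR_sum_right)
  have coord: "lorentz (descartes_dual w i) (f u) = 2 * u $ i" for u i
    by (simp add: f_def lorentz_sum_right lorentz_descartes_dual[OF assms] if_distrib cong: if_cong)
  have "inj f"
    unfolding linear_injective_0[OF lin]
  proof (intro allI impI)
    fix u assume "f u = 0"
    then have "2 * u $ i = 0" for i using coord[of i u] by simp
    then show "u = 0" by (simp add: vec_eq_iff)
  qed
  then obtain u where "x = f u"
    using linear_injective_imp_surjective[OF lin] by (metis surjD)
  then show ?thesis using that[of "\<lambda>m. u $ m"] by (simp add: f_def)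
qed

text \<open>A null vector orthogonal to \<open>w\<^sub>j\<close> and to the dual of \<open>w\<^sub>i\<close> has coordinates
  \<open>(0, q, r, s)\<close> with \<open>q = r + s\<close> in the basis \<open>w\<^sub>i, w\<^sub>j, w\<^sub>k, w\<^sub>l\<close>, so its Lorentz norm is \<open>4 r s\<close>.\<close>

lemma null_vec_orthogonal_descartes_dual:
  assumes gram: "descartes_gram w" and "i \<noteq> j"
    and null: "lorentz x x = 0" and "lorentz (w j) x = 0" "lorentz (descartes_dual w i) x = 0"
  shows "\<exists>k. k \<noteq> j \<and> lorentz x (w j + w k) = 0"
proof -
  obtain k l where d: "distinct [i, j, k, l]" using ex_distinct_4 \<open>i \<noteq> j\<close> by blast
  obtain u where "x = (\<Sum>m\<in>UNIV. u m *\<^sub>R w m)" using descartes_gram_spans[OF gram] by blast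
  then have x: "x = u i *\<^sub>R w i + u j *\<^sub>R w j + u k *\<^sub>R w k + u l *\<^sub>R w l"
    by (simp add: sum_UNIV_4_distinct[OF d])
  define U where "U = u i + u j + u k + u l"
  have wx: "lorentz (w m) x = U - 2 * u m" if "m \<in> {i, j, k, l}" for m
    using that d by (auto simp: x descartes_gramD[OF gram] U_def)
  have "lorentz (descartes_dual w i) x = 2 * u i"
    using d by (auto simp: x lorentz_descartes_dual[OF gram])
  with assms(5) have ui: "u i = 0" by simp
  from assms(4) wx[of j] have uj: "u j = u k + u l" by (simp add: U_def ui)
  have "lorentz x x =
      u i * lorentz (w i) x + u j * lorentz (w j) x + u k * lorentz (w k) x + u l * lorentz (w l) x"
    by (subst (1) x) simp
  also have "\<dots> = 4 * u k * u l" by (simp add: wx U_def ui uj algebra_simps)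
  finally have "u k = 0 \<or> u l = 0" using null by simp
  moreover have "lorentz x (w j + w l) = 2 * u k" "lorentz x (w j + w k) = 2 * u l"
    by (simp_all add: lorentz_commute[of x] wx U_def ui uj)
  ultimately show ?thesis using d by auto
qed

definition dual_config :: "config \<Rightarrow> config" where
  "dual_config C = ocircle_of_acc \<circ> descartes_dual (acc_coords \<circ> C)"

lemma dual_config:
  assumes "descartes_gram (acc_coords \<circ> C)"
  shows "\<forall>i. valid_oc (dual_config C i)"
    and "acc_coords \<circ> dual_config C = descartes_dual (acc_coords \<circ> C)"
  using ocircle_of_acc_inverse descartes_gramD[OF descartes_gram_descartes_dual[OF assms]]
  by (simp_all add: dual_config_def fun_eq_iff)

lemma oriented_descartes_config_dual_config:
  assumes "oriented_descartes_config C"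
  shows "oriented_descartes_config (dual_config C)"
proof -
  have gram: "descartes_gram (acc_coords \<circ> C)"
    and orient: "future_oriented (acc_coords \<circ> C) \<or> future_oriented (uminus \<circ> (acc_coords \<circ> C))"
    using assms by (simp_all add: oriented_descartes_config_iff)
  show ?thesis
    using dual_config[OF gram] descartes_gram_descartes_dual[OF gram] orient
    by (simp add: oriented_descartes_config_iff future_oriented_descartes_dual
        flip: descartes_dual_uminus)
qed

lemma D_mat_mult_W_mat:
  assumes "descartes_gram (acc_coords \<circ> C)"
  shows "D_mat ** W_mat C = W_mat (dual_config C)"
  using D_mat_mult_rows[of "acc_coords \<circ> C"] dual_config(2)[OF assms]
  by (simp add: W_mat_def fun_eq_iff)

lemma tangency_points_dual_config:
  assumes "\<forall>i. valid_oc (C i)" "descartes_gram (acc_coords \<circ> C)"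
  shows "tangency_points (dual_config C) = tangency_points C"
  using tangency_points_descartes_gram[OF assms] dual_config[OF assms(2)]
    tangency_points_descartes_gram[of "dual_config C"] descartes_gram_descartes_dual[OF assms(2)]
  by (simp add: pair_sums_descartes_dual)

lemma tangency_point_mem_dual_config:
  assumes "\<forall>i. valid_oc (C i)" "descartes_gram (acc_coords \<circ> C)" "distinct [i, j, k]"
  shows "tangency_point (C j) (C k) \<in> ext_pts (dual_config C i)"
proof -
  define w where "w = acc_coords \<circ> C"
  have gram: "descartes_gram w" using assms(2) by (simp add: w_def)
  have "point_of_null_vec (w j + w k) \<in> ext_pts (dual_config C i)"
  proof (rule point_of_null_vec_mem_ext_pts)
    show "valid_oc (dual_config C i)" using dual_config(1)[OF assms(2)] by simp
    show "lorentz (w j + w k) (w j + w k) = 0" "w j + w k \<noteq> 0"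
      using assms(3) descartes_gram_pair_sum_null[OF gram] descartes_gram_pair_sum_nonzero[OF gram]
      by auto
    show "lorentz (acc_coords (dual_config C i)) (w j + w k) = 0"
      using assms(3) dual_config(2)[OF assms(2)]
        lorentz_descartes_dual[OF assms(2), of i j] lorentz_descartes_dual[OF assms(2), of i k]
      by (simp add: fun_eq_iff w_def)
  qed
  then show ?thesis
    using assms(3) tangency_point_descartes_gram(2)[OF assms(1,2)] by (simp add: w_def)
qed

lemma orthogonal_oc_dual_config:
  assumes "\<forall>i. valid_oc (C i)" "descartes_gram (acc_coords \<circ> C)" "i \<noteq> j"
  shows "orthogonal_oc (C j) (dual_config C i)"
proof (rule orthogonal_oc_if_lorentz_eq_0)
  show "valid_oc (C j)" "valid_oc (dual_config C i)"
    using assms(1) dual_config(1)[OF assms(2)] by auto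
  show "lorentz (acc_coords (C j)) (acc_coords (dual_config C i)) = 0"
    using assms(3) dual_config(2)[OF assms(2)] lorentz_descartes_dual[OF assms(2), of i j]
    by (simp add: fun_eq_iff lorentz_commute)
qed

lemma ext_pts_inter_dual_config_subset:
  assumes valid: "\<forall>i. valid_oc (C i)" and gram: "descartes_gram (acc_coords \<circ> C)" and "i \<noteq> j"
  shows "ext_pts (C j) \<inter> ext_pts (dual_config C i) \<subseteq> tangency_points C"
proof
  define w where "w = acc_coords \<circ> C"
  have gram_w: "descartes_gram w" using gram by (simp add: w_def)
  fix P assume P: "P \<in> ext_pts (C j) \<inter> ext_pts (dual_config C i)"
  have "lorentz (w j) (null_vec P) = 0" "lorentz (descartes_dual w i) (null_vec P) = 0"
    using P mem_ext_pts_iff_lorentz valid dual_config[OF gram]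
    by (auto simp: w_def fun_eq_iff)
  then obtain k where "k \<noteq> j" and k: "lorentz (null_vec P) (w j + w k) = 0"
    using null_vec_orthogonal_descartes_dual[OF gram_w \<open>i \<noteq> j\<close> lorentz_null_vec_self] by blast
  have "point_of_null_vec (w j + w k) = P"
    using point_of_null_vec_eqI k descartes_gram_pair_sum_null[OF gram_w \<open>k \<noteq> j\<close>[symmetric]]
      descartes_gram_pair_sum_nonzero[OF gram_w] by blast
  then have "P = tangency_point (C j) (C k)"
    using tangency_point_descartes_gram(2)[OF valid gram] \<open>k \<noteq> j\<close> by (simp add: w_def)
  with \<open>k \<noteq> j\<close> show "P \<in> tangency_points C" unfolding tangency_points_def by blast
qed

lemma D_mat_in_Aut_QD: "D_mat \<in> Aut_QD"
  unfolding Aut_QD_def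
  by (simp add: vec_eq_iff forall_4 matrix_matrix_mult_def transpose_def D_mat_def Q_D_def sum_4)

theorem mainTheorem4:
  fixes C :: config
  assumes "oriented_descartes_config C"
  shows "D_mat \<in> Aut_QD \<and>
    (\<exists>Cp :: config. oriented_descartes_config Cp \<and> D_mat ** W_mat C = W_mat Cp \<and>
       (\<forall>i j k. j \<noteq> i \<longrightarrow> k \<noteq> i \<longrightarrow> j \<noteq> k \<longrightarrow>
           tangency_point (C j) (C k) \<in> ext_pts (Cp i)) \<and>
       tangency_points Cp = tangency_points C \<and>
       (\<forall>i j. i \<noteq> j \<longrightarrow> orthogonal_oc (C j) (Cp i) \<and>
           ext_pts (C j) \<inter> ext_pts (Cp i) \<subseteq> tangency_points C))"
proof -
  from assms have valid: "\<forall>i. valid_oc (C i)" and gram: "descartes_gram (acc_coords \<circ> C)"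
    by (simp_all add: oriented_descartes_config_iff)
  have "oriented_descartes_config (dual_config C)"
    using assms by (rule oriented_descartes_config_dual_config)
  moreover have "D_mat ** W_mat C = W_mat (dual_config C)"
    using gram by (rule D_mat_mult_W_mat)
  moreover have "tangency_point (C j) (C k) \<in> ext_pts (dual_config C i)"
    if "j \<noteq> i" "k \<noteq> i" "j \<noteq> k" for i j k
    using tangency_point_mem_dual_config[OF valid gram] that by simp
  moreover have "tangency_points (dual_config C) = tangency_points C"
    using valid gram by (rule tangency_points_dual_config)
  moreover have "orthogonal_oc (C j) (dual_config C i) \<and>
      ext_pts (C j) \<inter> ext_pts (dual_config C i) \<subseteq> tangency_points C" if "i \<noteq> j" for i j
    using orthogonal_oc_dual_config[OF valid gram that]
      ext_pts_inter_dual_config_subset[OF valid gram that] by blast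
  ultimately show ?thesis using D_mat_in_Aut_QD by blast
qed

end
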